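(* Assume $z_1-z_2+z_3-z_4=0$. Then for each phase $\ell\in\{w,\textit{nw}\}$, each $k\in\{1,\dots,4\}$ and each $j\in\{1,\dots,4\}$ with $j\ne k$, $$\frac{\partial\big(\overline{G}_{\ell,k+1/2}-\overline{G}_{\ell,k-1/2}\big)}{\partial S_{\ell,j}}\le0 .$$
   Context: An interaction region has four vertices labeled $k\in\{1,2,3,4\}$ counterclockwise; indices are cyclic mod 4. Vertex $k$ has depth $z_k\in\mathbb{R}$ and wetting saturation $S_k$; $S_{w,k}=S_k$, $S_{\textit{nw},k}=1-S_k$, so $\partial/\partial S_{\textit{nw},j}=-\partial/\partial S_j$. Half-interface $k+1/2$ joins vertices $k$ and $k+1$, with transmissibility $\overline{T}_{k+1/2}>0$ and $\overline{\Delta z}_{k+1/2}=z_{k+1}-z_k$. Two phases $w,\textit{nw}$ with constant densities $\rho_w,\rho_{\textit{nw}}$; $g>0$. Mobilities $\lambda_w,\lambda_{\textit{nw}}$ are positive differentiable functions of $S$, $\lambda_w$ nondecreasing and $\lambda_{\textit{nw}}$ nonincreasing in $S$; $\lambda_{\ell,k}=\lambda_\ell(S_k)$. $H(a,b)=ab/(a+b)$. Limiter $\varphi(r)=\dfrac{r^4+r^3+r^2+r}{r^4+r^3+r^2+r+1}$, $r\ge0$. Weights: $\overline{\omega}^G_{k+1/2}=\varphi\big(\overline{T}_{k+3/2}\overline{\Delta z}_{k+3/2}/(\overline{T}_{k+1/2}\overline{\Delta z}_{k+1/2})\big)$ if $\overline{\Delta z}_{k+1/2}\overline{\Delta z}_{k+3/2}>0$;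 $=\varphi\big(\overline{T}_{k-1/2}\overline{\Delta z}_{k-1/2}/(\overline{T}_{k+1/2}\overline{\Delta z}_{k+1/2})\big)$ if $\overline{\Delta z}_{k+1/2}\overline{\Delta z}_{k-1/2}>0$; $=0$ otherwise. For an ordered pair $(\ell,m)$ of the two distinct phases with $(\rho_\ell-\rho_m)\overline{\Delta z}_{k+1/2}>0$, writing $\omega=\overline{\omega}^G_{k+1/2}$: $\overline{\psi}_{\ell,m,k+1/2}=(1-\omega)H(\lambda_{\ell,k},\lambda_{m,k+1})+\omega H(\lambda_{\ell,k},\lambda_{m,k+2})$ if $\overline{\Delta z}_{k+1/2}\overline{\Delta z}_{k+3/2}>0$; $=(1-\omega)H(\lambda_{\ell,k},\lambda_{m,k+1})+\omega H(\lambda_{\ell,k-1},\lambda_{m,k+1})$ if $\overline{\Delta z}_{k+1/2}\overline{\Delta z}_{k-1/2}>0$; $=H(\lambda_{\ell,k},\lambda_{m,k+1})$ otherwise. If $(\rho_\ell-\rho_m)\overline{\Delta z}_{k+1/2}<0$, $\overline{\psi}_{\ell,m,k+1/2}$ is given by the same formulas with $\ell$ and $m$ interchanged; if $(\rho_\ell-\rho_m)\overline{\Delta z}_{k+1/2}=0$, set $\overline{\psi}_{\ell,m,k+1/2}=0$. Buoyancy flux of phase $\ell$ at half-interface $k+1/2$: $\overline{G}_{\ell,k+1/2}=\overline{T}_{k+1/2}\,\overline{\psi}_{\ell,m,k+1/2}\,(\rho_\ell-\rho_m)\,g\,\overline{\Delta z}_{k+1/2}$, where $m$ is the other phase. *)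

theory Defs
  imports "HOL-Analysis.Analysis"
begin

datatype phase = W | NW

fun other :: "phase \<Rightarrow> phase" where
  "other W = NW" | "other NW = W"

definition cyc :: "int \<Rightarrow> int" where
  "cyc k = (k - 1) mod 4 + 1"

definition Hm :: "real \<Rightarrow> real \<Rightarrow> real" where
  "Hm a b = a * b / (a + b)"

definition limiter :: "real \<Rightarrow> real" where
  "limiter r = (r^4 + r^3 + r^2 + r) / (r^4 + r^3 + r^2 + r + 1)"

text \<open>Half-interface k+1/2 is indexed by k. T k is the transmissibility of
  half-interface k+1/2 (for k in 1..4), z k the depth of vertex k.\<close>
definition Tb :: "(int \<Rightarrow> real) \<Rightarrow> int \<Rightarrow> real" where
  "Tb T k = T (cyc k)"

definition dzb :: "(int \<Rightarrow> real) \<Rightarrow> int \<Rightarrow> real" where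
  "dzb z k = z (cyc (k + 1)) - z (cyc k)"

definition omegaG :: "(int \<Rightarrow> real) \<Rightarrow> (int \<Rightarrow> real) \<Rightarrow> int \<Rightarrow> real" where
  "omegaG T z k =
     (if dzb z k * dzb z (k + 1) > 0
      then limiter (Tb T (k + 1) * dzb z (k + 1) / (Tb T k * dzb z k))
      else if dzb z k * dzb z (k - 1) > 0
      then limiter (Tb T (k - 1) * dzb z (k - 1) / (Tb T k * dzb z k))
      else 0)"

definition psi0 :: "(real \<Rightarrow> real) \<Rightarrow> (real \<Rightarrow> real) \<Rightarrow> (int \<Rightarrow> real) \<Rightarrow> (int \<Rightarrow> real)
    \<Rightarrow> (int \<Rightarrow> real) \<Rightarrow> int \<Rightarrow> real" where
  "psi0 a b T z S k =
     (let \<omega> = omegaG T z k; s = (\<lambda>i. S (cyc i)) in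
      if dzb z k * dzb z (k + 1) > 0
      then (1 - \<omega>) * Hm (a (s k)) (b (s (k + 1))) + \<omega> * Hm (a (s k)) (b (s (k + 2)))
      else if dzb z k * dzb z (k - 1) > 0
      then (1 - \<omega>) * Hm (a (s k)) (b (s (k + 1))) + \<omega> * Hm (a (s (k - 1))) (b (s (k + 1)))
      else Hm (a (s k)) (b (s (k + 1))))"

text \<open>lam W = wetting mobility as function of S, lam NW = non-wetting mobility as function of S.\<close>
definition psi :: "(phase \<Rightarrow> real) \<Rightarrow> (phase \<Rightarrow> real \<Rightarrow> real) \<Rightarrow> (int \<Rightarrow> real)
    \<Rightarrow> (int \<Rightarrow> real) \<Rightarrow> (int \<Rightarrow> real) \<Rightarrow> phase \<Rightarrow> phase \<Rightarrow> int \<Rightarrow> real" where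
  "psi rho lam T z S l m k =
     (let d = (rho l - rho m) * dzb z k in
      if d > 0 then psi0 (lam l) (lam m) T z S k
      else if d < 0 then psi0 (lam m) (lam l) T z S k
      else 0)"

definition Gflux :: "(phase \<Rightarrow> real) \<Rightarrow> real \<Rightarrow> (phase \<Rightarrow> real \<Rightarrow> real) \<Rightarrow> (int \<Rightarrow> real)
    \<Rightarrow> (int \<Rightarrow> real) \<Rightarrow> (int \<Rightarrow> real) \<Rightarrow> phase \<Rightarrow> int \<Rightarrow> real" where
  "Gflux rho g lam T z S l k =
     Tb T k * psi rho lam T z S l (other l) k * (rho l - rho (other l)) * g * dzb z k"

text \<open>Partial derivative with respect to the phase-l saturation at vertex j:
  S_w = S, S_nw = 1 - S, hence d/dS_nw = - d/dS.\<close>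
definition phase_pderiv :: "phase \<Rightarrow> ((int \<Rightarrow> real) \<Rightarrow> real) \<Rightarrow> (int \<Rightarrow> real) \<Rightarrow> int \<Rightarrow> real" where
  "phase_pderiv l F S j =
     (let d = deriv (\<lambda>t. F (S(j := t))) (S j) in if l = W then d else - d)"

end

theory Submission
  imports Defs
begin

text \<open>
  The condition z1 - z2 + z3 - z4 = 0 makes the depth differences alternate:
  dz(i+2) = -dz(i). Seen from vertex k, every harmonic mean entering the fluxes at k - 1/2
  and k + 1/2 therefore has one argument at vertex k, except the cross term
  H(lambda(k-1), lambda(k+1)), which occurs in both fluxes exactly when dz(k-1/2) and
  dz(k+1/2) have the same sign. The limiter satisfies phi(r) = r phi(1/r), so the two weights
  in front of the cross term agree and it cancels from the net flux. Raising the phase-l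
  saturation at a vertex j \<noteq> k raises the phase-l mobilities and lowers the other ones
  while leaving vertex k untouched; upwinding fixes the sign of each coefficient so that every
  remaining term, and hence the net flux, decreases.
\<close>

lemma cyc_range: "cyc i \<in> {1..4}"
  by (simp add: cyc_def)

lemma cyc_add: "cyc (i + n) = cyc (cyc i + n)"
  unfolding cyc_def by (simp add: mod_simps algebra_simps)

lemma dzb_add2:
  assumes "z 1 - z 2 + z 3 - z 4 = 0"
  shows "dzb z (i + 2) = - dzb z i"
proof -
  have shifts: "cyc (i + 1) = cyc (cyc i + 1)" "cyc (i + 2) = cyc (cyc i + 2)"
    "cyc (i + 2 + 1) = cyc (cyc i + 3)"
    using cyc_add[of i 1] cyc_add[of i 2] cyc_add[of i 3] by (simp_all add: add.assoc)
  have "cyc i \<in> {1, 2, 3, 4}"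
    using cyc_range[of i] by auto
  then show ?thesis
    using assms unfolding dzb_def shifts by (auto simp: cyc_def)
qed

lemma Tb_pos: "\<forall>i \<in> {1..4}. 0 < T i \<Longrightarrow> 0 < Tb T i"
  unfolding Tb_def using cyc_range by blast

lemma limiter_denom_pos: "0 \<le> r \<Longrightarrow> 0 < r^4 + r^3 + r^2 + r + (1::real)"
  by (simp add: add_nonneg_pos)

lemma limiter_nonneg: "0 \<le> r \<Longrightarrow> 0 \<le> limiter r"
  unfolding limiter_def by simp

lemma limiter_le_one: "0 \<le> r \<Longrightarrow> limiter r \<le> 1"
  using limiter_denom_pos[of r] unfolding limiter_def by (simp add: divide_le_eq_1)

lemma limiter_inverse:
  assumes "0 < r"
  shows "limiter r = r * limiter (1 / r)"
proof -
  have "r^4 * ((1/r)^4 + (1/r)^3 + (1/r)^2 + 1/r) = 1 + r + r^2 + r^3"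
    "r^4 * ((1/r)^4 + (1/r)^3 + (1/r)^2 + 1/r + 1) = 1 + r + r^2 + r^3 + r^4"
    using assms by (simp_all add: field_simps power2_eq_square power3_eq_cube power4_eq_xxxx)
  then have "limiter (1 / r) = (1 + r + r^2 + r^3) / (1 + r + r^2 + r^3 + r^4)"
    using assms unfolding limiter_def
    by (metis mult_divide_mult_cancel_left_if power_not_zero less_irrefl)
  then show ?thesis
    unfolding limiter_def by (simp add: algebra_simps power2_eq_square power3_eq_cube power4_eq_xxxx)
qed

lemma limiter_swap:
  assumes "0 < x * y"
  shows "y * limiter (x / y) = x * limiter (y / x)"
proof -
  have "0 < x / y" "y \<noteq> 0"
    using assms by (auto simp: zero_less_divide_iff zero_less_mult_iff)
  then show ?thesis
    using limiter_inverse[of "x / y"] by simp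
qed

lemma Hm_mono:
  assumes "0 < a" "a \<le> a'" "0 < b" "b \<le> b'"
  shows "Hm a b \<le> Hm a' b'"
proof -
  have "a * b * (a' + b') \<le> a' * b' * (a + b)"
    using assms by (simp add: algebra_simps add_mono mult_mono mult_left_mono mult_right_mono)
  then show ?thesis
    using assms unfolding Hm_def by (simp add: divide_simps)
qed

lemma omegaG_bounds:
  assumes Tp: "\<And>i. 0 < Tb T i"
  shows "0 \<le> omegaG T z i" and "omegaG T z i \<le> 1"
proof -
  have arg_nonneg: "0 \<le> Tb T p * x / (Tb T q * y)" if "0 < y * x" for p q x y
  proof -
    have "0 \<le> x / y"
      using that by (auto simp: zero_le_divide_iff zero_less_mult_iff)
    then show ?thesis
      using Tp[of p] Tp[of q]
      by (metis times_divide_times_eq divide_nonneg_pos mult_nonneg_nonneg less_imp_le)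
  qed
  show "0 \<le> omegaG T z i" "omegaG T z i \<le> 1"
    unfolding omegaG_def by (auto intro!: limiter_nonneg limiter_le_one arg_nonneg)
qed

lemma omegaG_balance:
  assumes Tp: "\<And>i. 0 < Tb T i" and zigzag: "\<And>i. dzb z (i + 2) = - dzb z i"
    and cross: "0 < dzb z (k - 1) * dzb z k"
  shows "Tb T k * dzb z k * omegaG T z k = Tb T (k - 1) * dzb z (k - 1) * omegaG T z (k - 1)"
proof -
  have "dzb z (k + 1) = - dzb z (k - 1)"
    using zigzag[of "k - 1"] by (simp add: ac_simps)
  then have "\<not> 0 < dzb z k * dzb z (k + 1)"
    using cross by (simp add: mult.commute)
  then have "omegaG T z k = limiter (Tb T (k - 1) * dzb z (k - 1) / (Tb T k * dzb z k))"
    using cross unfolding omegaG_def by (simp add: mult.commute)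
  moreover have "omegaG T z (k - 1) = limiter (Tb T k * dzb z k / (Tb T (k - 1) * dzb z (k - 1)))"
    using cross unfolding omegaG_def by simp
  moreover have "0 < (Tb T (k - 1) * dzb z (k - 1)) * (Tb T k * dzb z k)"
    using mult_pos_pos[OF mult_pos_pos[OF Tp[of "k - 1"] Tp[of k]] cross] by (simp add: ac_simps)
  ultimately show ?thesis
    using limiter_swap by simp
qed

text \<open>The weight omegaG vanishes when neither neighbouring interface has the sign of dz(i),
  so the fallback branch of psi0 is the case omega = 0 of this formula.\<close>

definition psi_seq ::
    "(int \<Rightarrow> real) \<Rightarrow> (int \<Rightarrow> real) \<Rightarrow> int \<Rightarrow> (int \<Rightarrow> real) \<Rightarrow> (int \<Rightarrow> real) \<Rightarrow> real"
  where "psi_seq T z i A B =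
    (1 - omegaG T z i) * Hm (A i) (B (i + 1)) + omegaG T z i *
      (if 0 < dzb z i * dzb z (i + 1) then Hm (A i) (B (i + 2)) else Hm (A (i - 1)) (B (i + 1)))"

definition upwind :: "real \<Rightarrow> ('a \<Rightarrow> 'a \<Rightarrow> real) \<Rightarrow> 'a \<Rightarrow> 'a \<Rightarrow> real"
  where "upwind c F U V = (if 0 < c then F U V else if c < 0 then F V U else 0)"

definition flux_seq :: "real \<Rightarrow> (int \<Rightarrow> real) \<Rightarrow> (int \<Rightarrow> real)
    \<Rightarrow> (int \<Rightarrow> real) \<Rightarrow> (int \<Rightarrow> real) \<Rightarrow> int \<Rightarrow> real"
  where "flux_seq D T z U V i = Tb T i * (D * dzb z i) * upwind (D * dzb z i) (psi_seq T z i) U V"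

definition mob :: "(phase \<Rightarrow> real \<Rightarrow> real) \<Rightarrow> phase \<Rightarrow> (int \<Rightarrow> real) \<Rightarrow> int \<Rightarrow> real"
  where "mob lam p S i = lam p (S (cyc i))"

lemma psi0_eq_psi_seq: "psi0 (lam p) (lam q) T z S i = psi_seq T z i (mob lam p S) (mob lam q S)"
  unfolding psi0_def psi_seq_def mob_def Let_def by (simp add: omegaG_def)

lemma Gflux_eq_flux_seq:
  "Gflux rho g lam T z S l i =
     g * flux_seq (rho l - rho (other l)) T z (mob lam l S) (mob lam (other l) S) i"
  unfolding Gflux_def flux_seq_def psi_def upwind_def Let_def psi0_eq_psi_seq
  by (simp add: ac_simps)

lemma psi_seq_upper:
  assumes zigzag: "\<And>i. dzb z (i + 2) = - dzb z i"
  shows "psi_seq T z k A B =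
    (1 - omegaG T z k) * Hm (A k) (B (k + 1)) + omegaG T z k *
      (if 0 < dzb z (k - 1) * dzb z k then Hm (A (k - 1)) (B (k + 1)) else Hm (A k) (B (k + 2)))"
proof -
  have next_dzb: "dzb z (k + 1) = - dzb z (k - 1)"
    using zigzag[of "k - 1"] by (simp add: ac_simps)
  moreover have "omegaG T z k = 0" if "dzb z (k - 1) * dzb z k = 0"
    using that next_dzb unfolding omegaG_def by auto
  ultimately show ?thesis
    unfolding psi_seq_def by (auto simp: ac_simps mult_less_0_iff zero_less_mult_iff)
qed

lemma psi_seq_lower:
  "psi_seq T z (k - 1) A B =
    (1 - omegaG T z (k - 1)) * Hm (A (k - 1)) (B k) + omegaG T z (k - 1) *
      (if 0 < dzb z (k - 1) * dzb z k then Hm (A (k - 1)) (B (k + 1)) else Hm (A (k - 2)) (B k))"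
  unfolding psi_seq_def by (simp add: ac_simps)

text \<open>The effect on the mobility sequences (U of phase l, V of the other phase) of raising the
  phase-l saturation at vertices other than k.\<close>

definition mobility_shift ::
    "int \<Rightarrow> (int \<Rightarrow> real) \<Rightarrow> (int \<Rightarrow> real) \<Rightarrow> (int \<Rightarrow> real) \<Rightarrow> (int \<Rightarrow> real) \<Rightarrow> bool"
  where "mobility_shift k U V U' V' \<longleftrightarrow>
    (\<forall>i. 0 < U i \<and> U i \<le> U' i \<and> 0 < V' i \<and> V' i \<le> V i) \<and> U' k = U k \<and> V' k = V k"

definition shift_antitone :: "int \<Rightarrow> ((int \<Rightarrow> real) \<Rightarrow> (int \<Rightarrow> real) \<Rightarrow> real) \<Rightarrow> bool"
  where "shift_antitone k F \<longleftrightarrow> (\<forall>U V U' V'. mobility_shift k U V U' V' \<longrightarrow> F U' V' \<le> F U V)"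

lemma shift_antitone_add:
  "shift_antitone k F \<Longrightarrow> shift_antitone k G \<Longrightarrow> shift_antitone k (\<lambda>U V. F U V + G U V)"
  unfolding shift_antitone_def by (blast intro: add_mono)

lemma shift_antitone_scale:
  "0 \<le> c \<Longrightarrow> shift_antitone k F \<Longrightarrow> shift_antitone k (\<lambda>U V. c * F U V)"
  unfolding shift_antitone_def by (blast intro: mult_left_mono)

lemma shift_antitone_Hm_U_at:
  "shift_antitone k (\<lambda>U V. Hm (U k) (V q))" "shift_antitone k (\<lambda>U V. Hm (V p) (U k))"
  unfolding shift_antitone_def mobility_shift_def by (auto intro: Hm_mono)

lemma shift_antitone_minus_Hm_V_at:
  "shift_antitone k (\<lambda>U V. - Hm (V k) (U q))" "shift_antitone k (\<lambda>U V. - Hm (U p) (V k))"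
  unfolding shift_antitone_def mobility_shift_def by (auto intro!: Hm_mono) (metis)+

lemma shift_antitone_upwind:
  assumes "0 \<le> t" "shift_antitone k F" "shift_antitone k (\<lambda>U V. - F V U)"
  shows "shift_antitone k (\<lambda>U V. t * c * upwind c F U V)"
  using assms unfolding shift_antitone_def upwind_def
  by (auto intro: mult_left_mono mult_left_mono_neg simp: mult_le_0_iff)

lemma upwind_add_scaled:
  "upwind c (\<lambda>A B. F A B + w * G A B) U V = upwind c F U V + w * upwind c G U V"
  unfolding upwind_def by simp

lemma upwind_minus: "upwind c (\<lambda>A B. - F A B) U V = - upwind c F U V"
  unfolding upwind_def by simp

lemma flux_seq_upper_shift_antitone:
  assumes Tp: "\<And>i. 0 < Tb T i" and zigzag: "\<And>i. dzb z (i + 2) = - dzb z i"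
    and noncross: "\<not> 0 < dzb z (k - 1) * dzb z k"
  shows "shift_antitone k (\<lambda>U V. flux_seq D T z U V k)"
proof -
  define w where "w = omegaG T z k"
  have w: "0 \<le> w" "0 \<le> 1 - w"
    using omegaG_bounds[OF Tp] unfolding w_def by auto
  define E where "E A B = (1 - w) * Hm (A k) (B (k + 1)) + w * Hm (A k) (B (k + 2))" for A B
  have psi: "psi_seq T z k = E"
    using noncross unfolding E_def w_def by (intro ext) (simp add: psi_seq_upper[OF zigzag])
  have "shift_antitone k E"
    unfolding E_def using w by (intro shift_antitone_add shift_antitone_scale shift_antitone_Hm_U_at)
  moreover have "shift_antitone k (\<lambda>U V. - E V U)"
    unfolding E_def minus_add_distrib mult_minus_right[symmetric]
    using w by (intro shift_antitone_add shift_antitone_scale shift_antitone_minus_Hm_V_at)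
  ultimately show ?thesis
    unfolding flux_seq_def psi using Tp[of k] by (intro shift_antitone_upwind) auto
qed

lemma flux_seq_lower_shift_antitone:
  assumes Tp: "\<And>i. 0 < Tb T i" and noncross: "\<not> 0 < dzb z (k - 1) * dzb z k"
  shows "shift_antitone k (\<lambda>U V. - flux_seq D T z U V (k - 1))"
proof -
  define w where "w = omegaG T z (k - 1)"
  have w: "0 \<le> w" "0 \<le> 1 - w"
    using omegaG_bounds[OF Tp] unfolding w_def by auto
  define E where "E A B = - ((1 - w) * Hm (A (k - 1)) (B k) + w * Hm (A (k - 2)) (B k))" for A B
  have flux: "- flux_seq D T z U V (k - 1) =
      Tb T (k - 1) * (D * dzb z (k - 1)) * upwind (D * dzb z (k - 1)) E U V" for U V
    using noncross unfolding flux_seq_def E_def w_def psi_seq_lower upwind_minus by simp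
  have "shift_antitone k E"
    unfolding E_def minus_add_distrib mult_minus_right[symmetric]
    using w by (intro shift_antitone_add shift_antitone_scale shift_antitone_minus_Hm_V_at)
  moreover have "shift_antitone k (\<lambda>U V. - E V U)"
    unfolding E_def minus_minus using w
    by (intro shift_antitone_add shift_antitone_scale shift_antitone_Hm_U_at)
  ultimately show ?thesis
    unfolding flux using Tp[of "k - 1"] by (intro shift_antitone_upwind) auto
qed

lemma net_flux_seq_cross:
  assumes Tp: "\<And>i. 0 < Tb T i" and zigzag: "\<And>i. dzb z (i + 2) = - dzb z i"
    and cross: "0 < dzb z (k - 1) * dzb z k"
  shows "flux_seq D T z U V k - flux_seq D T z U V (k - 1) =
    Tb T k * (D * dzb z k) * upwind (D * dzb z k)
      (\<lambda>A B. (1 - omegaG T z k) * Hm (A k) (B (k + 1))) U V +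
    Tb T (k - 1) * (D * dzb z (k - 1)) * upwind (D * dzb z (k - 1))
      (\<lambda>A B. - ((1 - omegaG T z (k - 1)) * Hm (A (k - 1)) (B k))) U V"
proof -
  define X where "X A B = Hm (A (k - 1)) (B (k + 1))" for A B
  have upper: "psi_seq T z k =
      (\<lambda>A B. (1 - omegaG T z k) * Hm (A k) (B (k + 1)) + omegaG T z k * X A B)"
    using cross unfolding X_def by (intro ext) (simp add: psi_seq_upper[OF zigzag])
  have lower: "psi_seq T z (k - 1) =
      (\<lambda>A B. (1 - omegaG T z (k - 1)) * Hm (A (k - 1)) (B k) + omegaG T z (k - 1) * X A B)"
    using cross unfolding X_def by (intro ext) (simp add: psi_seq_lower)
  have same_side: "upwind (D * dzb z k) X U V = upwind (D * dzb z (k - 1)) X U V"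
    using cross unfolding upwind_def by (auto simp: zero_less_mult_iff mult_less_0_iff)
  have cross_terms_cancel:
    "Tb T k * (D * dzb z k) * (omegaG T z k * upwind (D * dzb z k) X U V) =
     Tb T (k - 1) * (D * dzb z (k - 1)) * (omegaG T z (k - 1) * upwind (D * dzb z (k - 1)) X U V)"
  proof -
    have "Tb T k * (D * dzb z k) * (omegaG T z k * upwind (D * dzb z k) X U V) =
        D * upwind (D * dzb z k) X U V * (Tb T k * dzb z k * omegaG T z k)"
      by (simp add: algebra_simps)
    also have "\<dots> = D * upwind (D * dzb z (k - 1)) X U V * (Tb T (k - 1) * dzb z (k - 1) * omegaG T z (k - 1))"
      unfolding same_side omegaG_balance[OF Tp zigzag cross] ..
    finally show ?thesis
      by (simp add: algebra_simps)
  qed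
  show ?thesis
    unfolding flux_seq_def upper lower upwind_add_scaled upwind_minus distrib_left
    using cross_terms_cancel by simp
qed

lemma net_flux_seq_shift_antitone:
  assumes Tp: "\<And>i. 0 < Tb T i" and zigzag: "\<And>i. dzb z (i + 2) = - dzb z i"
  shows "shift_antitone k (\<lambda>U V. flux_seq D T z U V k - flux_seq D T z U V (k - 1))"
proof (cases "0 < dzb z (k - 1) * dzb z k")
  case True
  have w: "0 \<le> 1 - omegaG T z k" "0 \<le> 1 - omegaG T z (k - 1)"
    using omegaG_bounds[OF Tp] by auto
  define E where "E = (\<lambda>A B. (1 - omegaG T z k) * Hm (A k) (B (k + 1)))"
  define E' where "E' = (\<lambda>A B :: int \<Rightarrow> real. - ((1 - omegaG T z (k - 1)) * Hm (A (k - 1)) (B k)))"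
  have "shift_antitone k E" "shift_antitone k (\<lambda>U V. - E V U)"
    "shift_antitone k E'" "shift_antitone k (\<lambda>U V. - E' V U)"
    unfolding E_def E'_def minus_minus mult_minus_right[symmetric]
    by (intro shift_antitone_scale w shift_antitone_Hm_U_at shift_antitone_minus_Hm_V_at)+
  then show ?thesis
    unfolding net_flux_seq_cross[OF Tp zigzag True] E_def[symmetric] E'_def[symmetric]
    using Tp[of k] Tp[of "k - 1"] by (intro shift_antitone_add shift_antitone_upwind) auto
next
  case False
  have "shift_antitone k (\<lambda>U V. flux_seq D T z U V k + - flux_seq D T z U V (k - 1))"
    using False
    by (intro shift_antitone_add flux_seq_upper_shift_antitone flux_seq_lower_shift_antitone Tp zigzag)
  then show ?thesis
    by simp
qed

fun phase_saturation :: "phase \<Rightarrow> real \<Rightarrow> real" where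
  "phase_saturation W s = s"
| "phase_saturation NW s = 1 - s"

lemma mobility_shift_update:
  assumes "mono (lam W)" "antimono (lam NW)" "\<forall>p x. 0 < lam p x"
    and "cyc k \<noteq> j" "phase_saturation l s \<le> phase_saturation l t"
  shows "mobility_shift k (mob lam l (S(j := s))) (mob lam (other l) (S(j := s)))
           (mob lam l (S(j := t))) (mob lam (other l) (S(j := t)))"
  using assms by (cases l) (auto simp: mobility_shift_def mob_def monoD antimonoD)

lemma net_Gflux_update_antitone:
  assumes T_pos: "\<forall>i \<in> {1..4}. 0 < T i" and "0 \<le> g"
    and "mono (lam W)" "antimono (lam NW)" "\<forall>p x. 0 < lam p x"
    and "z 1 - z 2 + z 3 - z 4 = 0"
    and "cyc k \<noteq> j" "phase_saturation l s \<le> phase_saturation l t"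
  shows "Gflux rho g lam T z (S(j := t)) l k - Gflux rho g lam T z (S(j := t)) l (k - 1)
       \<le> Gflux rho g lam T z (S(j := s)) l k - Gflux rho g lam T z (S(j := s)) l (k - 1)"
proof -
  have "shift_antitone k (\<lambda>U V. flux_seq (rho l - rho (other l)) T z U V k
                               - flux_seq (rho l - rho (other l)) T z U V (k - 1))"
    using Tb_pos[OF T_pos] dzb_add2[OF \<open>z 1 - z 2 + z 3 - z 4 = 0\<close>]
    by (rule net_flux_seq_shift_antitone)
  then show ?thesis
    using mobility_shift_update[OF assms(3-5,7,8)] \<open>0 \<le> g\<close>
    unfolding Gflux_eq_flux_seq right_diff_distrib[symmetric] shift_antitone_def
    by (blast intro: mult_left_mono)
qed

lemma Hm_differentiable:
  "f differentiable (at x) \<Longrightarrow> g differentiable (at x) \<Longrightarrow> f x + g x \<noteq> 0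
    \<Longrightarrow> (\<lambda>t. Hm (f t) (g t)) differentiable (at x)"
  unfolding Hm_def by (auto intro!: derivative_intros)

lemma flux_seq_differentiable:
  assumes "\<And>i. (\<lambda>t. U t i) differentiable (at x)" "\<And>i. (\<lambda>t. V t i) differentiable (at x)"
    and "\<And>t i. 0 < U t i" "\<And>t i. 0 < V t i"
  shows "(\<lambda>t. flux_seq D T z (U t) (V t) i) differentiable (at x)"
proof -
  have Hm_diff: "(\<lambda>t. Hm (A t p) (B t q)) differentiable (at x)"
    if "A = U \<and> B = V \<or> A = V \<and> B = U" for A B p q
  proof -
    have "0 < A x p + B x q"
      using that assms(3,4) by (auto intro: add_pos_pos)
    then show ?thesis
      using that assms(1,2) by (intro Hm_differentiable) auto
  qed
  show ?thesis
    unfolding flux_seq_def upwind_def psi_seq_def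
    by (cases "0 < D * dzb z i"; cases "D * dzb z i < 0"; cases "0 < dzb z i * dzb z (i + 1)")
      (auto intro!: derivative_intros Hm_diff)
qed

lemma Gflux_update_differentiable:
  assumes "\<forall>p x. 0 < lam p x" "\<forall>p x. lam p differentiable (at x)"
  shows "(\<lambda>t. Gflux rho g lam T z (S(j := t)) l i) differentiable (at x)"
proof -
  have "(\<lambda>t. mob lam p (S(j := t)) i') differentiable (at x)" for p i'
    using assms(2) by (cases "cyc i' = j") (simp_all add: mob_def)
  then show ?thesis
    unfolding Gflux_eq_flux_seq using assms(1)
    by (intro derivative_intros flux_seq_differentiable) (auto simp: mob_def)
qed

lemma has_real_derivative_nonneg_if_mono:
  fixes f :: "real \<Rightarrow> real"
  assumes "mono f" "(f has_real_derivative f') (at x)"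
  shows "0 \<le> f'"
proof (rule ccontr)
  assume "\<not> 0 \<le> f'"
  then obtain d where "0 < d" "\<forall>h > 0. h < d \<longrightarrow> f (x + h) < f x"
    using DERIV_neg_dec_right[OF assms(2)] by force
  then have "f (x + d / 2) < f x"
    by simp
  moreover have "f x \<le> f (x + d / 2)"
    using \<open>0 < d\<close> by (intro monoD[OF assms(1)]) simp
  ultimately show False
    by simp
qed

lemma has_real_derivative_nonpos_if_antimono:
  fixes f :: "real \<Rightarrow> real"
  assumes "antimono f" "(f has_real_derivative f') (at x)"
  shows "f' \<le> 0"
proof -
  have "mono (\<lambda>t. - f t)"
    using assms(1) by (simp add: mono_def antimono_def)
  then show ?thesis
    using has_real_derivative_nonneg_if_mono DERIV_minus[OF assms(2)] by fastforce
qed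

theorem mainTheorem5:
  fixes z S T :: "int \<Rightarrow> real" and rho :: "phase \<Rightarrow> real" and g :: real
    and lam :: "phase \<Rightarrow> real \<Rightarrow> real" and l :: phase and k j :: int
  assumes T_pos: "\<forall>i \<in> {1..4}. T i > 0"
    and g_pos: "g > 0"
    and lam_pos: "\<forall>p x. lam p x > 0"
    and lam_diff: "\<forall>p x. lam p differentiable (at x)"
    and lam_w_mono: "mono (lam W)"
    and lam_nw_antimono: "antimono (lam NW)"
    and z_cond: "z 1 - z 2 + z 3 - z 4 = 0"
    and k_range: "k \<in> {1..4}" and j_range: "j \<in> {1..4}" and jk: "j \<noteq> k"
  shows "phase_pderiv l
           (\<lambda>S'. Gflux rho g lam T z S' l k - Gflux rho g lam T z S' l (k - 1)) S j \<le> 0"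
proof -
  define F where
    "F = (\<lambda>t. Gflux rho g lam T z (S(j := t)) l k - Gflux rho g lam T z (S(j := t)) l (k - 1))"
  have pderiv: "phase_pderiv l (\<lambda>S'. Gflux rho g lam T z S' l k - Gflux rho g lam T z S' l (k - 1)) S j =
      (if l = W then deriv F (S j) else - deriv F (S j))"
    unfolding phase_pderiv_def F_def by simp
  have "cyc k \<noteq> j"
    using k_range jk by (auto simp: cyc_def)
  then have F_step: "F t \<le> F s" if "phase_saturation l s \<le> phase_saturation l t" for s t
    unfolding F_def using g_pos
    by (intro net_Gflux_update_antitone[OF T_pos _ lam_w_mono lam_nw_antimono lam_pos z_cond _ that]) auto
  have F_deriv: "(F has_real_derivative deriv F (S j)) (at (S j))"
    unfolding F_def DERIV_deriv_iff_real_differentiable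
    using lam_pos lam_diff by (intro derivative_intros Gflux_update_differentiable)
  show ?thesis
  proof (cases l)
    case W
    then have "antimono F"
      using F_step by (auto intro: antimonoI)
    then show ?thesis
      using W pderiv has_real_derivative_nonpos_if_antimono[OF _ F_deriv] by simp
  next
    case NW
    then have "mono F"
      using F_step by (auto intro: monoI)
    then show ?thesis
      using NW pderiv has_real_derivative_nonneg_if_mono[OF _ F_deriv] by simp
  qed
qed

end
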